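(* Let $S$ be a commutative Hausdorff semitopological semigroup. Then $S^{Lmc}$ is not commutative if and only if there exist unbounded sequences $(x_n)$ and $(y_n)$ in $S$ such that $$\mathrm{cl}_{S^{Lmc}}\varepsilon(\{x_ky_n:k<n,\ k,n\in\mathbb{N}\})\cap\mathrm{cl}_{S^{Lmc}}\varepsilon(\{y_kx_n:k<n,\ k,n\in\mathbb{N}\})=\emptyset.$$
   Context: A Hausdorff semitopological semigroup is a semigroup $S$ with a Hausdorff topology such that all maps $\lambda_s(x)=sx$, $r_s(x)=xs$ are continuous. $\mathcal{CB}(S)$: bounded continuous complex functions with sup norm; $\beta S$ its spectrum with Gelfand topology; $L_sf(x)=f(sx)$, $(T_\mu f)(s)=\mu(L_sf)$; $Lmc(S)=\{f\in\mathcal{CB}(S):T_\mu f\in\mathcal{CB}(S)\ \forall \mu\in\beta S\}$. $S^{Lmc}$ is the spectrum of $Lmc(S)$ with the Gelfand topology and multiplication $\mu\nu=\mu\circ T_\nu$, where $(T_\nu f)(s)=\nu(L_sf)$ for $f\in Lmc(S)$; $\varepsilon:S\to S^{Lmc}$ is evaluation, $\varepsilon(s)(f)=f(s)$. $S^*=S^{Lmc}\setminus\varepsilon(S)$. A set $A\subseteq S$ is unbounded if $\mathrm{cl}_{S^{Lmc}}\varepsilon(A)\cap S^*\neq\emptyset$; a sequence $(x_n)$ is unbounded if $\{x_n:n\in\mathbb{N}\}$ is unbounded. *)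

theory Defs
  imports "HOL-Analysis.Analysis"
begin

definition CB :: "('a::topological_space \<Rightarrow> complex) set" where
  "CB = {f. continuous_on UNIV f \<and> bounded (range f)}"

definition is_character :: "('a \<Rightarrow> complex) set \<Rightarrow> (('a \<Rightarrow> complex) \<Rightarrow> complex) \<Rightarrow> bool" where
  "is_character A \<mu> \<longleftrightarrow>
     (\<forall>f\<in>A. \<forall>g\<in>A. \<mu> (\<lambda>x. f x + g x) = \<mu> f + \<mu> g \<and> \<mu> (\<lambda>x. f x * g x) = \<mu> f * \<mu> g) \<and>
     (\<forall>c. \<forall>f\<in>A. \<mu> (\<lambda>x. c * f x) = c * \<mu> f) \<and>
     (\<exists>f\<in>A. \<mu> f \<noteq> 0)"

definition betaS :: "(('a::topological_space \<Rightarrow> complex) \<Rightarrow> complex) set" where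
  "betaS = {\<mu>. is_character CB \<mu>}"

definition Ltr :: "'a::semigroup_mult \<Rightarrow> ('a \<Rightarrow> complex) \<Rightarrow> ('a \<Rightarrow> complex)" where
  "Ltr s f = (\<lambda>x. f (s * x))"

definition Tmu :: "(('a::semigroup_mult \<Rightarrow> complex) \<Rightarrow> complex) \<Rightarrow> ('a \<Rightarrow> complex) \<Rightarrow> ('a \<Rightarrow> complex)" where
  "Tmu \<mu> f = (\<lambda>s. \<mu> (Ltr s f))"

definition Lmc :: "('a::{topological_space, semigroup_mult} \<Rightarrow> complex) set" where
  "Lmc = {f \<in> CB. \<forall>\<mu>\<in>betaS. Tmu \<mu> f \<in> CB}"

definition SLmc :: "(('a::{topological_space, semigroup_mult} \<Rightarrow> complex) \<Rightarrow> complex) set" where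
  "SLmc = {\<mu> \<in> extensional Lmc. is_character Lmc \<mu>}"

text \<open>Gelfand (weak-star) topology: pointwise convergence on Lmc(S).\<close>
definition SLmc_top :: "(('a::{topological_space, semigroup_mult} \<Rightarrow> complex) \<Rightarrow> complex) topology" where
  "SLmc_top = subtopology (product_topology (\<lambda>_. euclidean) Lmc) SLmc"

definition lmc_mult :: "(('a::{topological_space, semigroup_mult} \<Rightarrow> complex) \<Rightarrow> complex)
    \<Rightarrow> (('a \<Rightarrow> complex) \<Rightarrow> complex) \<Rightarrow> (('a \<Rightarrow> complex) \<Rightarrow> complex)" where
  "lmc_mult \<mu> \<nu> = restrict (\<lambda>f. \<mu> (Tmu \<nu> f)) Lmc"

definition evl :: "'a::{topological_space, semigroup_mult} \<Rightarrow> (('a \<Rightarrow> complex) \<Rightarrow> complex)" where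
  "evl s = restrict (\<lambda>f. f s) Lmc"

definition Sstar :: "(('a::{topological_space, semigroup_mult} \<Rightarrow> complex) \<Rightarrow> complex) set" where
  "Sstar = SLmc - range evl"

definition lmc_closure :: "'a::{topological_space, semigroup_mult} set \<Rightarrow> (('a \<Rightarrow> complex) \<Rightarrow> complex) set" where
  "lmc_closure A = SLmc_top closure_of (evl ` A)"

definition unbounded_set :: "'a::{topological_space, semigroup_mult} set \<Rightarrow> bool" where
  "unbounded_set A \<longleftrightarrow> lmc_closure A \<inter> Sstar \<noteq> {}"

definition unbounded_seq :: "(nat \<Rightarrow> 'a::{topological_space, semigroup_mult}) \<Rightarrow> bool" where
  "unbounded_seq x \<longleftrightarrow> unbounded_set (range x)"

definition SLmc_commutative :: "'a::{topological_space, semigroup_mult} itself \<Rightarrow> bool" where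
  "SLmc_commutative _ \<longleftrightarrow>
     (\<forall>\<mu>\<in>(SLmc :: (('a \<Rightarrow> complex) \<Rightarrow> complex) set). \<forall>\<nu>\<in>SLmc. lmc_mult \<mu> \<nu> = lmc_mult \<nu> \<mu>)"

end

theory Submission
  imports Defs
begin

(* Everything goes through point evaluations. A character of an algebra of bounded continuous
   functions that is closed under inverting functions bounded away from 0 is a pointwise limit of
   evaluations. With Tychonoff's theorem this turns closures in S^Lmc into pointwise closures of
   evaluations, extends every character of Lmc(S) to CB(S), and makes S^Lmc closed under its product.

   If mu nu and nu mu differ at f, with values a and b, dependent choice yields sequences x, y with
   f(x_k y_n) near a and f(y_k x_n) near b for all k < n, so f separates the two closures. Cluster
   points phi, psi of the tails of x and y satisfy phi psi f near a and psi phi f near b; since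
   evaluations at points of a commutative S commute with every element of S^Lmc, phi and psi lie in
   S^*, so x and y are unbounded. Conversely, if mu and nu in S^* are cluster points of x and y,
   then mu nu lies in the closure of {x_k y_n : k < n} (nu still adheres to every tail of y) and
   nu mu in the closure of {y_k x_n : k < n}, so disjointness gives mu nu <> nu mu. *)

section \<open>Directed families and dependent choice\<close>

lemma directed_finite_lower_bound:
  assumes "\<P> \<noteq> {}" and directed: "\<And>P Q. P \<in> \<P> \<Longrightarrow> Q \<in> \<P> \<Longrightarrow> \<exists>R\<in>\<P>. R \<subseteq> P \<inter> Q"
    and "finite \<F>" "\<F> \<subseteq> \<P>"
  shows "\<exists>R\<in>\<P>. R \<subseteq> \<Inter>\<F>"
  using assms(3,4)
proof (induction \<F> rule: finite_induct)
  case empty then show ?case using assms(1) by auto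
next
  case (insert P \<F>)
  then obtain R where "R \<in> \<P>" "R \<subseteq> \<Inter>\<F>" by auto
  moreover obtain R' where "R' \<in> \<P>" "R' \<subseteq> P \<inter> R"
    using directed[of P R] insert.prems \<open>R \<in> \<P>\<close> by blast
  ultimately show ?case by blast
qed

lemma compact_space_Inter_closure_of_image:
  assumes "compact_space X" and "\<P> \<noteq> {}" and nonempty: "\<And>P. P \<in> \<P> \<Longrightarrow> P \<noteq> {}"
    and directed: "\<And>P Q. P \<in> \<P> \<Longrightarrow> Q \<in> \<P> \<Longrightarrow> \<exists>R\<in>\<P>. R \<subseteq> P \<inter> Q"
    and ev: "range ev \<subseteq> topspace X"
  shows "\<Inter>((\<lambda>P. X closure_of (ev ` P)) ` \<P>) \<noteq> {}"
proof -
  define D where "D = (\<lambda>P. X closure_of (ev ` P))"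
  have closed: "\<forall>C\<in>D ` \<P>. closedin X C" by (simp add: D_def)
  have fip: "\<forall>\<F>. finite \<F> \<and> \<F> \<subseteq> D ` \<P> \<longrightarrow> \<Inter>\<F> \<noteq> {}"
  proof (intro allI impI)
    fix \<F> assume \<F>: "finite \<F> \<and> \<F> \<subseteq> D ` \<P>"
    then obtain \<Q> where \<Q>: "\<Q> \<subseteq> \<P>" "finite \<Q>" "\<F> = D ` \<Q>"
      by (meson finite_subset_image)
    then obtain R where R: "R \<in> \<P>" "R \<subseteq> \<Inter>\<Q>"
      using directed_finite_lower_bound[OF \<open>\<P> \<noteq> {}\<close> directed] by blast
    obtain s where "s \<in> R" using nonempty[OF R(1)] by blast
    have "ev s \<in> D Q" if "Q \<in> \<Q>" for Q
    proof -
      have "s \<in> Q" using \<open>s \<in> R\<close> R(2) that by blast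
      moreover have "ev ` Q \<subseteq> topspace X" using ev by blast
      ultimately show ?thesis unfolding D_def using closure_of_subset by blast
    qed
    then show "\<Inter>\<F> \<noteq> {}" unfolding \<Q>(3) by blast
  qed
  show ?thesis
    using assms(1)[unfolded compact_space_fip] closed fip unfolding D_def by blast
qed

lemma pairwise_dependent_choice:
  assumes step: "\<And>F. finite F \<Longrightarrow> \<forall>p\<in>F. Q p \<Longrightarrow> \<exists>z. Q z \<and> (\<forall>p\<in>F. R p z)"
  shows "\<exists>z. \<forall>k n::nat. k < n \<longrightarrow> R (z k) (z n)"
proof -
  define next_pt where "next_pt = (\<lambda>ps. SOME z. Q z \<and> (\<forall>p\<in>set ps. R p z))"
  define pts where "pts = rec_nat [] (\<lambda>_ ps. ps @ [next_pt ps])"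
  define z where "z = (\<lambda>n. next_pt (pts n))"
  have pts_Suc: "pts (Suc n) = pts n @ [z n]" for n
    by (simp add: pts_def z_def)
  have z: "Q (z n) \<and> (\<forall>p\<in>set (pts n). R p (z n))" if "\<forall>p\<in>set (pts n). Q p" for n
    unfolding z_def next_pt_def by (rule someI_ex) (use step that in simp)
  have pts: "(\<forall>p\<in>set (pts n). Q p) \<and> pts n = map z [0..<n]" for n
  proof (induction n)
    case (Suc n)
    then show ?case using z[of n] by (simp add: pts_Suc)
  qed (simp add: pts_def)
  have "R (z k) (z n)" if "k < n" for k n
  proof -
    have "z k \<in> set (pts n)" using pts[of n] that by simp
    then show ?thesis using z[of n] pts[of n] by blast
  qed
  then show ?thesis by blast
qed

section \<open>Pointwise closures of point evaluations\<close>

lemma zero_if_norm_le_all: "(\<And>e. 0 < e \<Longrightarrow> cmod z \<le> e) \<Longrightarrow> z = 0"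
  by (metis field_le_epsilon add_0 norm_le_zero_iff)

lemma ex_common_ball:
  fixes c :: "'i \<Rightarrow> 'b::metric_space"
  assumes "finite G" "\<And>g. g \<in> G \<Longrightarrow> open (V g)" "\<And>g. g \<in> G \<Longrightarrow> c g \<in> V g"
  shows "\<exists>e>0. \<forall>g\<in>G. ball (c g) e \<subseteq> V g"
proof -
  have "\<forall>g\<in>G. \<exists>r>0. ball (c g) r \<subseteq> V g" using assms(2,3) open_contains_ball by blast
  then obtain r where r: "\<forall>g\<in>G. 0 < r g \<and> ball (c g) (r g) \<subseteq> V g"
    using bchoice[of G "\<lambda>g r. 0 < r \<and> ball (c g) r \<subseteq> V g"] by blast
  define e where "e = Min (insert 1 (r ` G))"
  have "0 < e" "\<And>g. g \<in> G \<Longrightarrow> e \<le> r g"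
    using assms(1) r unfolding e_def by (auto simp: Min_gr_iff)
  then show ?thesis using r by (meson subset_ball subset_trans)
qed

text \<open>\<phi> lies in the closure of the evaluations at points of P, for the topology of pointwise
  convergence on A.\<close>
definition in_eval_closure ::
    "('a \<Rightarrow> complex) set \<Rightarrow> 'a set \<Rightarrow> (('a \<Rightarrow> complex) \<Rightarrow> complex) \<Rightarrow> bool" where
  "in_eval_closure A P \<phi> \<longleftrightarrow>
     (\<forall>G e. finite G \<longrightarrow> G \<subseteq> A \<longrightarrow> 0 < e \<longrightarrow> (\<exists>s\<in>P. \<forall>g\<in>G. cmod (g s - \<phi> g) < e))"

lemma in_eval_closureI:
  "(\<And>G e. finite G \<Longrightarrow> G \<subseteq> A \<Longrightarrow> 0 < e \<Longrightarrow> \<exists>s\<in>P. \<forall>g\<in>G. cmod (g s - \<phi> g) < e)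
    \<Longrightarrow> in_eval_closure A P \<phi>"
  unfolding in_eval_closure_def by blast

lemma in_eval_closureD:
  "in_eval_closure A P \<phi> \<Longrightarrow> finite G \<Longrightarrow> G \<subseteq> A \<Longrightarrow> 0 < e \<Longrightarrow> \<exists>s\<in>P. \<forall>g\<in>G. cmod (g s - \<phi> g) < e"
  unfolding in_eval_closure_def by blast

lemma in_eval_closure_mono: "in_eval_closure A P \<phi> \<Longrightarrow> P \<subseteq> Q \<Longrightarrow> in_eval_closure A Q \<phi>"
  unfolding in_eval_closure_def by (meson subsetD)

lemma in_eval_closure_seq:
  assumes "in_eval_closure A P \<phi>" "finite G" "G \<subseteq> A"
  obtains s where "\<And>n. s n \<in> P" "\<And>g. g \<in> G \<Longrightarrow> (\<lambda>n. g (s n)) \<longlonglongrightarrow> \<phi> g"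
proof -
  have "\<forall>n. \<exists>s\<in>P. \<forall>g\<in>G. cmod (g s - \<phi> g) < 1 / Suc n"
    using in_eval_closureD[OF assms] by simp
  then obtain s where s: "\<And>n. s n \<in> P" "\<And>n g. g \<in> G \<Longrightarrow> cmod (g (s n) - \<phi> g) < 1 / Suc n"
    by metis
  have "(\<lambda>n. g (s n)) \<longlonglongrightarrow> \<phi> g" if "g \<in> G" for g
  proof (rule LIMSEQ_I)
    fix r :: real assume "0 < r"
    then obtain N where N: "1 / Suc N < r" using nat_approx_posE by blast
    have "cmod (g (s n) - \<phi> g) < r" if "N \<le> n" for n
    proof -
      have "1 / real (Suc n) \<le> 1 / Suc N" using that by (simp add: frac_le)
      then show ?thesis using s(2)[OF \<open>g \<in> G\<close>, of n] N by linarith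
    qed
    then show "\<exists>N. \<forall>n\<ge>N. norm (g (s n) - \<phi> g) < r" by blast
  qed
  then show thesis using that s(1) by blast
qed

lemma in_eval_closure_norm_le:
  assumes "in_eval_closure A P \<phi>" "g \<in> A" and bound: "\<And>s. s \<in> P \<Longrightarrow> cmod (g s - c) \<le> \<delta>"
  shows "cmod (\<phi> g - c) \<le> \<delta>"
proof -
  obtain s where "\<And>n. s n \<in> P" "(\<lambda>n. g (s n)) \<longlonglongrightarrow> \<phi> g"
    using in_eval_closure_seq[OF assms(1), of "{g}"] assms(2) by auto
  then show ?thesis
    using bound
    by (intro tendsto_upperbound[OF tendsto_norm[OF tendsto_diff[OF _ tendsto_const]]]) auto
qed

lemma in_eval_closure_Diff_finite:
  assumes \<phi>: "in_eval_closure A P \<phi>" and F: "finite F"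
    and separated: "\<And>s. s \<in> F \<Longrightarrow> \<exists>h\<in>A. \<phi> h \<noteq> h s"
  shows "in_eval_closure A (P - F) \<phi>"
proof (rule in_eval_closureI)
  fix G e assume G: "finite G" "G \<subseteq> A" and e: "0 < (e::real)"
  obtain H where H: "\<And>s. s \<in> F \<Longrightarrow> H s \<in> A \<and> \<phi> (H s) \<noteq> H s s"
    using separated by metis
  define e' where "e' = Min (insert e ((\<lambda>s. cmod (H s s - \<phi> (H s))) ` F))"
  have "0 < cmod (H s s - \<phi> (H s))" if "s \<in> F" for s
    using H[OF that] by auto
  then have "0 < e'" unfolding e'_def using e F by (subst Min_gr_iff) auto
  have "e' \<le> e" unfolding e'_def using F by (intro Min_le) auto
  have e'_le: "e' \<le> cmod (H s s - \<phi> (H s))" if "s \<in> F" for s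
    unfolding e'_def using F that by (intro Min_le) auto
  have "finite (G \<union> H ` F)" using G(1) F by simp
  moreover have "G \<union> H ` F \<subseteq> A" using G(2) H by blast
  ultimately
  obtain p where p: "p \<in> P" "\<forall>g\<in>G \<union> H ` F. cmod (g p - \<phi> g) < e'"
    by (meson in_eval_closureD[OF \<phi>] \<open>0 < e'\<close>)
  have "p \<notin> F"
  proof
    assume "p \<in> F"
    then have "cmod (H p p - \<phi> (H p)) < e'" using p(2) by blast
    with e'_le[OF \<open>p \<in> F\<close>] show False by linarith
  qed
  moreover have "cmod (g p - \<phi> g) < e" if "g \<in> G" for g
  proof -
    have "cmod (g p - \<phi> g) < e'" using p(2) that by blast
    then show ?thesis using \<open>e' \<le> e\<close> by linarith
  qed
  ultimately show "\<exists>s\<in>P - F. \<forall>g\<in>G. cmod (g s - \<phi> g) < e" using p(1) by blast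
qed

lemma in_eval_closure_if_in_closure_of:
  assumes cont: "\<And>g. g \<in> A \<Longrightarrow> continuous_map T euclidean (\<lambda>\<psi>. \<psi> g)"
    and \<phi>: "\<phi> \<in> T closure_of ((\<lambda>s. restrict (\<lambda>g. g s) A) ` P)"
  shows "in_eval_closure A P \<phi>"
proof (rule in_eval_closureI)
  fix G e assume G: "finite G" "G \<subseteq> A" and e: "0 < (e::real)"
  define U where "U = (\<Inter>g\<in>G. {\<psi> \<in> topspace T. \<psi> g \<in> ball (\<phi> g) e}) \<inter> topspace T"
  have "openin T U"
    unfolding U_def using G cont
    by (intro openin_INT openin_continuous_map_preimage[where Y=euclidean]) auto
  moreover have "\<phi> \<in> topspace T" using \<phi> by (simp add: in_closure_of)
  then have "\<phi> \<in> U" unfolding U_def using e by simp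
  ultimately have "\<exists>y. y \<in> (\<lambda>s. restrict (\<lambda>g. g s) A) ` P \<and> y \<in> U"
    using \<phi> unfolding in_closure_of by blast
  then obtain s where s: "s \<in> P" "restrict (\<lambda>g. g s) A \<in> U" by blast
  have "cmod (g s - \<phi> g) < e" if "g \<in> G" for g
  proof -
    have "restrict (\<lambda>g. g s) A g \<in> ball (\<phi> g) e" using s(2) that unfolding U_def by blast
    then show ?thesis using that G(2) by (auto simp: dist_norm norm_minus_commute)
  qed
  then show "\<exists>s\<in>P. \<forall>g\<in>G. cmod (g s - \<phi> g) < e" using s(1) by blast
qed

section \<open>Characters of algebras of bounded continuous functions\<close>

lemma mem_CB_iff: "f \<in> CB \<longleftrightarrow> continuous_on UNIV f \<and> (\<exists>B. \<forall>x. cmod (f x) \<le> B)"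
  unfolding CB_def bounded_iff by auto

lemma CB_I: "continuous_on UNIV f \<Longrightarrow> (\<And>x. cmod (f x) \<le> B) \<Longrightarrow> f \<in> CB"
  unfolding mem_CB_iff by blast

locale CB_algebra =
  fixes A :: "('a::topological_space \<Rightarrow> complex) set"
  assumes subset_CB: "A \<subseteq> CB"
    and one_mem: "(\<lambda>x. 1) \<in> A"
    and add_mem: "f \<in> A \<Longrightarrow> g \<in> A \<Longrightarrow> (\<lambda>x. f x + g x) \<in> A"
    and mult_mem: "f \<in> A \<Longrightarrow> g \<in> A \<Longrightarrow> (\<lambda>x. f x * g x) \<in> A"
    and scale_mem: "f \<in> A \<Longrightarrow> (\<lambda>x. c * f x) \<in> A"
    and cnj_mem: "f \<in> A \<Longrightarrow> (\<lambda>x. cnj (f x)) \<in> A"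
    and inverse_mem: "f \<in> A \<Longrightarrow> 0 < e \<Longrightarrow> (\<And>x. e \<le> cmod (f x)) \<Longrightarrow> (\<lambda>x. inverse (f x)) \<in> A"
begin

lemma const_mem: "(\<lambda>x. c) \<in> A"
  using scale_mem[OF one_mem, of c] by simp

lemma diff_const_mem: "f \<in> A \<Longrightarrow> (\<lambda>x. f x - c) \<in> A"
  using add_mem[OF _ const_mem, of f "- c"] by simp

lemma sum_mem: "finite G \<Longrightarrow> (\<And>g. g \<in> G \<Longrightarrow> F g \<in> A) \<Longrightarrow> (\<lambda>x. \<Sum>g\<in>G. F g x) \<in> A"
  by (induction G rule: finite_induct) (auto intro: add_mem const_mem[of 0, simplified])

lemma character_if_in_eval_closure:
  assumes l: "in_eval_closure A P l"
  shows "is_character A l"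
proof -
  have common_limit: "\<exists>s. \<forall>k\<in>{f, g, h}. (\<lambda>n. k (s n)) \<longlonglongrightarrow> l k"
    if fgh: "f \<in> A" "g \<in> A" "h \<in> A" for f g h
  proof -
    obtain s where "\<And>k. k \<in> {f, g, h} \<Longrightarrow> (\<lambda>n. k (s n)) \<longlonglongrightarrow> l k"
      by (rule in_eval_closure_seq[OF l, of "{f, g, h}"]) (use fgh in auto)
    then show ?thesis by blast
  qed
  show ?thesis
    unfolding is_character_def
  proof (intro conjI ballI allI)
    fix f g assume f: "f \<in> A" and g: "g \<in> A"
    obtain s where s: "\<forall>k\<in>{f, g, \<lambda>x. f x + g x}. (\<lambda>n. k (s n)) \<longlonglongrightarrow> l k"
      using common_limit[OF f g add_mem[OF f g]] by blast
    then have "(\<lambda>n. f (s n) + g (s n)) \<longlonglongrightarrow> l f + l g" by (auto intro: tendsto_add)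
    with s show "l (\<lambda>x. f x + g x) = l f + l g" by (auto intro: LIMSEQ_unique)
    obtain s where s: "\<forall>k\<in>{f, g, \<lambda>x. f x * g x}. (\<lambda>n. k (s n)) \<longlonglongrightarrow> l k"
      using common_limit[OF f g mult_mem[OF f g]] by blast
    then have "(\<lambda>n. f (s n) * g (s n)) \<longlonglongrightarrow> l f * l g" by (auto intro: tendsto_mult)
    with s show "l (\<lambda>x. f x * g x) = l f * l g" by (auto intro: LIMSEQ_unique)
  next
    fix c f assume f: "f \<in> A"
    obtain s where s: "\<forall>k\<in>{f, f, \<lambda>x. c * f x}. (\<lambda>n. k (s n)) \<longlonglongrightarrow> l k"
      using common_limit[OF f f scale_mem[OF f]] by blast
    then have "(\<lambda>n. c * f (s n)) \<longlonglongrightarrow> c * l f" by (auto intro: tendsto_mult_left)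
    with s show "l (\<lambda>x. c * f x) = c * l f" by (auto intro: LIMSEQ_unique)
  next
    obtain s where "\<forall>k\<in>{\<lambda>x. 1, \<lambda>x. 1, \<lambda>x. 1}. (\<lambda>n. k (s n)) \<longlonglongrightarrow> l k"
      using common_limit[OF one_mem one_mem one_mem] by blast
    then have "l (\<lambda>x. 1) = 1" by (auto intro: LIMSEQ_unique)
    then show "\<exists>f\<in>A. l f \<noteq> 0" using one_mem by force
  qed
qed

text \<open>Tychonoff: the evaluations lie in the compact product of the closures of the (bounded) ranges.\<close>
lemma ex_in_eval_closure:
  assumes "\<P> \<noteq> {}" and nonempty: "\<And>P. P \<in> \<P> \<Longrightarrow> P \<noteq> {}"
    and directed: "\<And>P Q. P \<in> \<P> \<Longrightarrow> Q \<in> \<P> \<Longrightarrow> \<exists>R\<in>\<P>. R \<subseteq> P \<inter> Q"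
  shows "\<exists>l\<in>extensional A. \<forall>P\<in>\<P>. in_eval_closure A P l"
proof -
  define K where "K = product_topology (\<lambda>g. top_of_set (closure (range g))) A"
  define ev where "ev = (\<lambda>s. restrict (\<lambda>g. g s) A)"
  have topspace_K: "topspace K = (\<Pi>\<^sub>E g\<in>A. closure (range g))"
    by (simp add: K_def)
  have ev_K: "range ev \<subseteq> topspace K"
    by (auto simp: topspace_K ev_def intro: closure_subset[THEN subsetD])
  have "compact_space K"
    unfolding K_def compact_space_product_topology
  proof (intro disjI2 ballI)
    fix g assume "g \<in> A"
    then have "bounded (range g)" using subset_CB by (auto simp: CB_def)
    then show "compact_space (top_of_set (closure (range g)))"
      by (simp add: compact_space_subtopology compactin_euclidean_iff compact_closure)
  qed
  then have "\<Inter>((\<lambda>P. K closure_of (ev ` P)) ` \<P>) \<noteq> {}"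
    by (rule compact_space_Inter_closure_of_image[OF _ \<open>\<P> \<noteq> {}\<close> nonempty directed ev_K])
  then obtain l where l: "\<And>P. P \<in> \<P> \<Longrightarrow> l \<in> K closure_of (ev ` P)" by blast
  then have "l \<in> topspace K"
    using \<open>\<P> \<noteq> {}\<close> by (auto simp: in_closure_of)
  then have "l \<in> extensional A" by (simp add: topspace_K PiE_def)
  moreover have "in_eval_closure A P l" if "P \<in> \<P>" for P
  proof (rule in_eval_closure_if_in_closure_of)
    show "continuous_map K euclidean (\<lambda>\<psi>. \<psi> g)" if "g \<in> A" for g
      unfolding K_def
      by (rule continuous_map_into_fulltopology[OF continuous_map_product_projection[OF that]])
    show "l \<in> K closure_of (\<lambda>s. restrict (\<lambda>g. g s) A) ` P"
      using l[OF that] unfolding ev_def .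
  qed
  ultimately show ?thesis by blast
qed
end

locale CB_character = CB_algebra +
  fixes \<phi>
  assumes character: "is_character A \<phi>"
begin

lemma add: "f \<in> A \<Longrightarrow> g \<in> A \<Longrightarrow> \<phi> (\<lambda>x. f x + g x) = \<phi> f + \<phi> g"
  using character unfolding is_character_def by blast

lemma mult: "f \<in> A \<Longrightarrow> g \<in> A \<Longrightarrow> \<phi> (\<lambda>x. f x * g x) = \<phi> f * \<phi> g"
  using character unfolding is_character_def by blast

lemma scale: "f \<in> A \<Longrightarrow> \<phi> (\<lambda>x. c * f x) = c * \<phi> f"
  using character unfolding is_character_def by blast

lemma one: "\<phi> (\<lambda>x. 1) = 1"
proof -
  obtain f where f: "f \<in> A" "\<phi> f \<noteq> 0" using character unfolding is_character_def by blast
  then show ?thesis using mult[OF one_mem f(1)] by simp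
qed

lemma const: "\<phi> (\<lambda>x. c) = c"
  using scale[OF one_mem, of c] one by simp

lemma diff_const: "f \<in> A \<Longrightarrow> \<phi> (\<lambda>x. f x - c) = \<phi> f - c"
  using add[OF _ const_mem, of f "- c"] const[of "- c"] by simp

lemma sum: "finite G \<Longrightarrow> (\<And>g. g \<in> G \<Longrightarrow> F g \<in> A) \<Longrightarrow> \<phi> (\<lambda>x. \<Sum>g\<in>G. F g x) = (\<Sum>g\<in>G. \<phi> (F g))"
  by (induction G rule: finite_induct) (simp_all add: const add sum_mem)

lemma inverse:
  assumes "f \<in> A" "0 < e" "\<And>x. e \<le> cmod (f x)"
  shows "\<phi> f \<noteq> 0" and "\<phi> (\<lambda>x. inverse (f x)) = inverse (\<phi> f)"
proof -
  have "f x \<noteq> 0" for x using assms(2) assms(3)[of x] by auto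
  then have prod: "\<phi> f * \<phi> (\<lambda>x. inverse (f x)) = 1"
    using mult[OF assms(1) inverse_mem[OF assms]] one by simp
  then show "\<phi> f \<noteq> 0" by auto
  show "\<phi> (\<lambda>x. inverse (f x)) = inverse (\<phi> f)" using inverse_unique[OF prod] by simp
qed

text \<open>If no value of f came close to \<phi> f, then f - \<phi> f would be invertible in A, yet it lies in
  the kernel of \<phi>.\<close>
lemma ex_close_point:
  assumes f: "f \<in> A" and e: "0 < e"
  shows "\<exists>x. cmod (f x - \<phi> f) < e"
proof (rule ccontr)
  assume "\<not> ?thesis"
  then have "e \<le> cmod (f x - \<phi> f)" for x by (simp add: not_less)
  then have "\<phi> (\<lambda>x. f x - \<phi> f) \<noteq> 0" by (rule inverse(1)[OF diff_const_mem[OF f] e])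
  then show False by (simp add: diff_const[OF f])
qed

lemma mem_closed:
  assumes "f \<in> A" "closed C" "\<And>x. f x \<in> C"
  shows "\<phi> f \<in> C"
proof -
  have "\<phi> f \<in> closure (range f)"
    unfolding closure_approachable
  proof (intro allI impI)
    fix \<epsilon> :: real assume "0 < \<epsilon>"
    then obtain x where "cmod (f x - \<phi> f) < \<epsilon>" using ex_close_point[OF assms(1)] by blast
    then show "\<exists>y\<in>range f. dist y (\<phi> f) < \<epsilon>" by (auto simp: dist_norm)
  qed
  moreover have "closure (range f) \<subseteq> C" using assms(2,3) by (intro closure_minimal) auto
  ultimately show ?thesis by blast
qed

lemma cnj:
  assumes f: "f \<in> A"
  shows "\<phi> (\<lambda>x. cnj (f x)) = cnj (\<phi> f)"
proof -
  define u where "u = (\<lambda>x. (1/2) * (f x + cnj (f x)))"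
  define v where "v = (\<lambda>x. (- \<i>/2) * (f x + (- 1) * cnj (f x)))"
  have u: "u \<in> A" and v: "v \<in> A"
    unfolding u_def v_def by (intro scale_mem add_mem f cnj_mem)+
  have "\<phi> u \<in> \<real>"
    by (rule mem_closed[OF u closed_complex_Reals]) (simp add: u_def complex_is_Real_iff)
  moreover have "\<phi> v \<in> \<real>"
    by (rule mem_closed[OF v closed_complex_Reals]) (simp add: v_def complex_is_Real_iff)
  moreover have "\<phi> (\<lambda>x. u x + c * v x) = \<phi> u + c * \<phi> v" for c
    by (simp add: add[OF u scale_mem[OF v]] scale[OF v])
  moreover have "f = (\<lambda>x. u x + \<i> * v x)" "(\<lambda>x. cnj (f x)) = (\<lambda>x. u x + (- \<i>) * v x)"
    by (rule ext, simp add: u_def v_def field_simps)+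
  ultimately show ?thesis by (metis Reals_cnj_iff complex_cnj_add complex_cnj_mult complex_cnj_i)
qed

lemma in_eval_closure_UNIV: "in_eval_closure A UNIV \<phi>"
proof (rule in_eval_closureI)
  fix G e assume G: "finite G" "G \<subseteq> A" and e: "0 < (e::real)"
  define F where "F = (\<lambda>g x. (g x - \<phi> g) * cnj (g x - \<phi> g))"
  have F: "F g \<in> A" "\<phi> (F g) = 0" if "g \<in> G" for g
  proof -
    have g: "(\<lambda>x. g x - \<phi> g) \<in> A" using that G(2) by (blast intro: diff_const_mem)
    then show "F g \<in> A" unfolding F_def by (intro mult_mem cnj_mem)
    show "\<phi> (F g) = 0"
      unfolding F_def mult[OF g cnj_mem[OF g]] using that G(2) by (auto simp: diff_const)
  qed
  define h where "h = (\<lambda>x. \<Sum>g\<in>G. F g x)"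
  have "h \<in> A" "\<phi> h = 0"
    unfolding h_def using G(1) F by (simp_all add: sum_mem sum)
  then obtain x where x: "cmod (h x) < e\<^sup>2"
    using ex_close_point[of h "e\<^sup>2"] e by auto
  have h_eq: "h x = of_real (\<Sum>g\<in>G. (cmod (g x - \<phi> g))\<^sup>2)"
    unfolding h_def F_def complex_norm_square[symmetric] by simp
  have "(cmod (g x - \<phi> g))\<^sup>2 < e\<^sup>2" if "g \<in> G" for g
  proof -
    have "(cmod (g x - \<phi> g))\<^sup>2 \<le> (\<Sum>g\<in>G. (cmod (g x - \<phi> g))\<^sup>2)"
      using G(1) that by (intro member_le_sum) auto
    also have "\<dots> = cmod (h x)"
      unfolding h_eq norm_of_real by (rule abs_of_nonneg[symmetric]) (simp add: sum_nonneg)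
    also have "\<dots> < e\<^sup>2" by (rule x)
    finally show ?thesis .
  qed
  then show "\<exists>s\<in>UNIV. \<forall>g\<in>G. cmod (g s - \<phi> g) < e"
    using e by (meson UNIV_I power_less_imp_less_base less_imp_le)
qed

end

lemma CB_algebra_CB: "CB_algebra CB"
proof
  fix f g :: "'a \<Rightarrow> complex" and c :: complex and e :: real
  assume f: "f \<in> CB"
  then obtain Bf where cf: "continuous_on UNIV f" and Bf: "\<And>x. cmod (f x) \<le> Bf"
    by (auto simp: mem_CB_iff)
  show "(\<lambda>x. c * f x) \<in> CB"
    by (rule CB_I[where B="cmod c * Bf"])
      (intro continuous_intros cf, simp add: norm_mult mult_left_mono Bf)
  show "(\<lambda>x. cnj (f x)) \<in> CB"
    by (rule CB_I[where B=Bf]) (intro continuous_intros cf, simp add: Bf)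
  { assume g: "g \<in> CB"
    then obtain Bg where cg: "continuous_on UNIV g" and Bg: "\<And>x. cmod (g x) \<le> Bg"
      by (auto simp: mem_CB_iff)
    show "(\<lambda>x. f x + g x) \<in> CB"
      by (rule CB_I[where B="Bf + Bg"])
        (intro continuous_intros cf cg, meson Bf Bg norm_triangle_le add_mono)
    show "(\<lambda>x. f x * g x) \<in> CB"
      by (rule CB_I[where B="Bf * Bg"])
        (intro continuous_intros cf cg, simp add: norm_mult mult_mono' Bf Bg) }
  assume e: "0 < e" and fe: "\<And>x. e \<le> cmod (f x)"
  then have "f x \<noteq> 0" for x by (metis norm_zero not_le)
  then show "(\<lambda>x. inverse (f x)) \<in> CB"
    using fe e
    by (intro CB_I[where B="inverse e"] continuous_intros cf) (simp_all add: norm_inverse le_imp_inverse_le)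
next
  show "(\<lambda>x. 1) \<in> CB" by (rule CB_I[where B=1]) simp_all
qed simp

lemma (in CB_algebra) is_character_restrict: "is_character A (restrict \<phi> A) \<longleftrightarrow> is_character A \<phi>"
  by (simp add: is_character_def add_mem mult_mem scale_mem)

section \<open>Left translations\<close>

lemma Ltr_Ltr: "Ltr x (Ltr t f) = Ltr (t * x) f"
  unfolding Ltr_def by (simp add: mult.assoc)

lemma Ltr_Tmu: "Ltr t (Tmu \<rho> f) = Tmu \<rho> (Ltr t f)"
  unfolding Tmu_def by (simp add: Ltr_Ltr) (simp add: Ltr_def)

locale Ltr_character = CB_character A \<phi>
  for A :: "('a::{topological_space, semigroup_mult} \<Rightarrow> complex) set" and \<phi> +
  assumes Ltr_mem: "f \<in> A \<Longrightarrow> Ltr s f \<in> A"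
begin

lemma Tmu_one: "Tmu \<phi> (\<lambda>x. 1) = (\<lambda>s. 1)"
  by (simp add: Tmu_def Ltr_def one)

lemma Tmu_add: "f \<in> A \<Longrightarrow> g \<in> A \<Longrightarrow> Tmu \<phi> (\<lambda>x. f x + g x) = (\<lambda>s. Tmu \<phi> f s + Tmu \<phi> g s)"
  using add[OF Ltr_mem Ltr_mem] by (simp add: Tmu_def Ltr_def)

lemma Tmu_mult: "f \<in> A \<Longrightarrow> g \<in> A \<Longrightarrow> Tmu \<phi> (\<lambda>x. f x * g x) = (\<lambda>s. Tmu \<phi> f s * Tmu \<phi> g s)"
  using mult[OF Ltr_mem Ltr_mem] by (simp add: Tmu_def Ltr_def)

lemma Tmu_scale: "f \<in> A \<Longrightarrow> Tmu \<phi> (\<lambda>x. c * f x) = (\<lambda>s. c * Tmu \<phi> f s)"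
  using scale[OF Ltr_mem] by (simp add: Tmu_def Ltr_def)

lemma Tmu_cnj: "f \<in> A \<Longrightarrow> Tmu \<phi> (\<lambda>x. cnj (f x)) = (\<lambda>s. cnj (Tmu \<phi> f s))"
  using cnj[OF Ltr_mem] by (simp add: Tmu_def Ltr_def)

lemma Tmu_inverse:
  assumes "f \<in> A" "0 < e" "\<And>x. e \<le> cmod (f x)"
  shows "Tmu \<phi> (\<lambda>x. inverse (f x)) = (\<lambda>s. inverse (Tmu \<phi> f s))"
    and "e \<le> cmod (Tmu \<phi> f s)"
proof -
  have "e \<le> cmod (Ltr s f x)" for s x using assms(3) by (simp add: Ltr_def)
  note inv = inverse(2)[OF Ltr_mem[OF assms(1)] assms(2) this]
  show "Tmu \<phi> (\<lambda>x. inverse (f x)) = (\<lambda>s. inverse (Tmu \<phi> f s))"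
    using inv by (simp add: Tmu_def Ltr_def)
  have "closed {z. e \<le> cmod z}" by (intro closed_Collect_le continuous_intros)
  then show "e \<le> cmod (Tmu \<phi> f s)"
    unfolding Tmu_def using mem_closed[OF Ltr_mem[OF assms(1)], of "{z. e \<le> cmod z}"] assms(3)
    by (simp add: Ltr_def)
qed

lemma CB_algebra_Tmu_preimage: "CB_algebra {f \<in> A. Tmu \<phi> f \<in> CB}"
proof -
  interpret CB: CB_algebra "CB :: ('a \<Rightarrow> complex) set" by (rule CB_algebra_CB)
  show ?thesis
  proof
    show "{f \<in> A. Tmu \<phi> f \<in> CB} \<subseteq> CB" using subset_CB by blast
    show "(\<lambda>x. 1) \<in> {f \<in> A. Tmu \<phi> f \<in> CB}" by (simp add: one_mem Tmu_one CB.one_mem)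
  next
    fix f g :: "'a \<Rightarrow> complex" and c :: complex and e :: real
    assume f: "f \<in> {f \<in> A. Tmu \<phi> f \<in> CB}"
    then show "(\<lambda>x. c * f x) \<in> {f \<in> A. Tmu \<phi> f \<in> CB}"
      and "(\<lambda>x. cnj (f x)) \<in> {f \<in> A. Tmu \<phi> f \<in> CB}"
      by (simp_all add: scale_mem Tmu_scale CB.scale_mem cnj_mem Tmu_cnj CB.cnj_mem)
    { assume "g \<in> {f \<in> A. Tmu \<phi> f \<in> CB}"
      with f show "(\<lambda>x. f x + g x) \<in> {f \<in> A. Tmu \<phi> f \<in> CB}"
        and "(\<lambda>x. f x * g x) \<in> {f \<in> A. Tmu \<phi> f \<in> CB}"
        by (simp_all add: add_mem Tmu_add CB.add_mem mult_mem Tmu_mult CB.mult_mem) }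
    assume "0 < e" "\<And>x. e \<le> cmod (f x)"
    with f show "(\<lambda>x. inverse (f x)) \<in> {f \<in> A. Tmu \<phi> f \<in> CB}"
      by (simp add: inverse_mem Tmu_inverse CB.inverse_mem)
  qed
qed

end

lemma CB_algebra_Int_INT:
  fixes A :: "'i \<Rightarrow> ('a::topological_space \<Rightarrow> complex) set"
  assumes "\<And>i. i \<in> I \<Longrightarrow> CB_algebra (A i)"
  shows "CB_algebra (CB \<inter> (\<Inter>i\<in>I. A i))"
proof -
  interpret CB: CB_algebra "CB :: ('a \<Rightarrow> complex) set" by (rule CB_algebra_CB)
  show ?thesis
  proof
    fix f g :: "'a \<Rightarrow> complex" and c :: complex and e :: real
    assume f: "f \<in> CB \<inter> (\<Inter>i\<in>I. A i)"
    then show "(\<lambda>x. c * f x) \<in> CB \<inter> (\<Inter>i\<in>I. A i)" "(\<lambda>x. cnj (f x)) \<in> CB \<inter> (\<Inter>i\<in>I. A i)"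
      using assms by (simp_all add: CB.scale_mem CB_algebra.scale_mem CB.cnj_mem CB_algebra.cnj_mem)
    { assume "g \<in> CB \<inter> (\<Inter>i\<in>I. A i)"
      with f show "(\<lambda>x. f x + g x) \<in> CB \<inter> (\<Inter>i\<in>I. A i)" "(\<lambda>x. f x * g x) \<in> CB \<inter> (\<Inter>i\<in>I. A i)"
        using assms by (simp_all add: CB.add_mem CB_algebra.add_mem CB.mult_mem CB_algebra.mult_mem) }
    assume "0 < e" "\<And>x. e \<le> cmod (f x)"
    with f show "(\<lambda>x. inverse (f x)) \<in> CB \<inter> (\<Inter>i\<in>I. A i)"
      using assms by (simp add: CB.inverse_mem CB_algebra.inverse_mem)
  qed (use assms in \<open>simp_all add: CB.one_mem CB_algebra.one_mem\<close>)
qed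

lemma Lmc_eq_Int_INT: "Lmc = CB \<inter> (\<Inter>\<mu>\<in>betaS. {f \<in> CB. Tmu \<mu> f \<in> CB})"
  unfolding Lmc_def by blast

lemma mem_LmcI: "f \<in> CB \<Longrightarrow> (\<And>\<mu>. \<mu> \<in> betaS \<Longrightarrow> Tmu \<mu> f \<in> CB) \<Longrightarrow> f \<in> Lmc"
  unfolding Lmc_def by blast

lemma Lmc_subset_CB: "Lmc \<subseteq> CB"
  unfolding Lmc_def by blast

lemma Tmu_mem_CB_if_betaS: "f \<in> Lmc \<Longrightarrow> \<mu> \<in> betaS \<Longrightarrow> Tmu \<mu> f \<in> CB"
  unfolding Lmc_def by blast

lemma SLmc_iff: "\<mu> \<in> SLmc \<longleftrightarrow> \<mu> \<in> extensional Lmc \<and> is_character Lmc \<mu>"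
  unfolding SLmc_def by blast

lemma topspace_SLmc_top: "topspace SLmc_top = SLmc"
  unfolding SLmc_top_def SLmc_def by (auto simp: PiE_def)

lemma lmc_mult_eq_iff:
  "lmc_mult \<mu> \<nu> = lmc_mult \<mu>' \<nu>' \<longleftrightarrow> (\<forall>f\<in>Lmc. lmc_mult \<mu> \<nu> f = lmc_mult \<mu>' \<nu>' f)"
proof
  assume "\<forall>f\<in>Lmc. lmc_mult \<mu> \<nu> f = lmc_mult \<mu>' \<nu>' f"
  then show "lmc_mult \<mu> \<nu> = lmc_mult \<mu>' \<nu>'" unfolding lmc_mult_def by (intro restrict_ext) simp
qed simp

section \<open>The semigroup S^Lmc\<close>

context
  assumes left_continuous: "\<And>s::'a::{topological_space, semigroup_mult}. continuous_on UNIV (\<lambda>x. s * x)"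
begin

lemma Ltr_mem_CB:
  assumes "(f :: 'a \<Rightarrow> complex) \<in> CB" shows "Ltr s f \<in> CB"
proof -
  obtain B where f: "continuous_on UNIV f" "\<And>x. cmod (f x) \<le> B" using assms by (auto simp: mem_CB_iff)
  have "continuous_on UNIV (f \<circ> (\<lambda>x. s * x))"
    by (rule continuous_on_compose[OF left_continuous continuous_on_subset[OF f(1) subset_UNIV]])
  with f(2) show ?thesis unfolding Ltr_def o_def by (intro CB_I)
qed

lemma Ltr_character_betaS: "(\<mu> :: ('a \<Rightarrow> complex) \<Rightarrow> complex) \<in> betaS \<Longrightarrow> Ltr_character CB \<mu>"
  unfolding betaS_def
  by (intro Ltr_character.intro CB_character.intro CB_algebra_CB Ltr_character_axioms.intro
      CB_character_axioms.intro Ltr_mem_CB) simp_all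

lemma CB_algebra_Lmc: "CB_algebra (Lmc :: ('a \<Rightarrow> complex) set)"
  unfolding Lmc_eq_Int_INT
  by (intro CB_algebra_Int_INT Ltr_character.CB_algebra_Tmu_preimage Ltr_character_betaS)

lemma Ltr_mem_Lmc: "(f :: 'a \<Rightarrow> complex) \<in> Lmc \<Longrightarrow> Ltr s f \<in> Lmc"
proof (rule mem_LmcI)
  assume f: "f \<in> Lmc"
  show "Ltr s f \<in> CB" using f Lmc_subset_CB by (blast intro: Ltr_mem_CB)
  show "Tmu \<mu> (Ltr s f) \<in> CB" if "\<mu> \<in> betaS" for \<mu>
    unfolding Ltr_Tmu[symmetric] by (rule Ltr_mem_CB[OF Tmu_mem_CB_if_betaS[OF f that]])
qed

lemma Ltr_character_Lmc: "is_character (Lmc :: ('a \<Rightarrow> complex) set) \<rho> \<Longrightarrow> Ltr_character Lmc \<rho>"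
  by (intro Ltr_character.intro CB_character.intro CB_algebra_Lmc Ltr_character_axioms.intro
      CB_character_axioms.intro Ltr_mem_Lmc)

lemma CB_character_Lmc: "is_character (Lmc :: ('a \<Rightarrow> complex) set) \<rho> \<Longrightarrow> CB_character Lmc \<rho>"
  by (rule Ltr_character.axioms(1)[OF Ltr_character_Lmc])

text \<open>The extension is a cluster point of the evaluations at the points where \<rho> is approximated on
  finitely many functions of Lmc.\<close>
lemma ex_betaS_extension:
  assumes \<rho>: "is_character (Lmc :: ('a \<Rightarrow> complex) set) \<rho>"
  shows "\<exists>l\<in>betaS. \<forall>g\<in>Lmc. l g = \<rho> g"
proof -
  interpret R: CB_character Lmc \<rho> by (rule CB_character_Lmc[OF \<rho>])
  interpret CB: CB_algebra "CB :: ('a \<Rightarrow> complex) set" by (rule CB_algebra_CB)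
  define U where "U = (\<lambda>G e. {s::'a. \<forall>g\<in>G. cmod (g s - \<rho> g) < e})"
  define \<P> where "\<P> = {U G e | G e. finite G \<and> G \<subseteq> Lmc \<and> 0 < e}"
  have "U {} 1 \<in> \<P>" unfolding \<P>_def by (intro CollectI exI[of _ "{}"] exI[of _ 1]) simp
  then have "\<P> \<noteq> {}" by blast
  moreover have "P \<noteq> {}" if "P \<in> \<P>" for P
    using that R.in_eval_closure_UNIV unfolding \<P>_def U_def in_eval_closure_def by blast
  moreover have "\<exists>R\<in>\<P>. R \<subseteq> P \<inter> Q" if PQ: "P \<in> \<P>" "Q \<in> \<P>" for P Q
  proof -
    obtain G1 e1 where 1: "P = U G1 e1" "finite G1" "G1 \<subseteq> Lmc" "0 < e1"
      using PQ(1) unfolding \<P>_def by blast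
    obtain G2 e2 where 2: "Q = U G2 e2" "finite G2" "G2 \<subseteq> Lmc" "0 < e2"
      using PQ(2) unfolding \<P>_def by blast
    have "U (G1 \<union> G2) (min e1 e2) \<in> \<P>"
      unfolding \<P>_def using 1 2 by (intro CollectI exI[of _ "G1 \<union> G2"] exI[of _ "min e1 e2"]) simp
    moreover have "U (G1 \<union> G2) (min e1 e2) \<subseteq> P \<inter> Q" unfolding 1 2 U_def by auto
    ultimately show ?thesis by blast
  qed
  ultimately obtain l where l: "\<And>P. P \<in> \<P> \<Longrightarrow> in_eval_closure CB P l"
    using CB.ex_in_eval_closure by metis
  have "l \<in> betaS"
    unfolding betaS_def using CB.character_if_in_eval_closure[OF l[OF \<open>U {} 1 \<in> \<P>\<close>]] by simp
  moreover have "l g = \<rho> g" if g: "g \<in> Lmc" for g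
  proof (rule zero_if_norm_le_all[of "l g - \<rho> g", simplified])
    fix e :: real assume "0 < e"
    then have "U {g} e \<in> \<P>" unfolding \<P>_def using g by (intro CollectI exI[of _ "{g}"] exI[of _ e]) simp
    then show "cmod (l g - \<rho> g) \<le> e"
      by (rule in_eval_closure_norm_le[OF l _ less_imp_le]) (use g Lmc_subset_CB in \<open>auto simp: U_def\<close>)
  qed
  ultimately show ?thesis by blast
qed

lemma Tmu_mem_CB:
  assumes \<rho>: "is_character (Lmc :: ('a \<Rightarrow> complex) set) \<rho>" and f: "f \<in> Lmc"
  shows "Tmu \<rho> f \<in> CB"
proof -
  obtain l where l: "l \<in> betaS" "\<And>g. g \<in> Lmc \<Longrightarrow> l g = \<rho> g" using ex_betaS_extension[OF \<rho>] by blast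
  have "Tmu \<rho> f = Tmu l f" unfolding Tmu_def using l(2) Ltr_mem_Lmc[OF f] by simp
  then show ?thesis using Tmu_mem_CB_if_betaS[OF f l(1)] by simp
qed

lemma character_comp_Tmu:
  assumes \<kappa>: "CB_character B \<kappa>" and \<rho>: "is_character (Lmc :: ('a \<Rightarrow> complex) set) \<rho>"
    and T: "\<And>f. f \<in> Lmc \<Longrightarrow> Tmu \<rho> f \<in> B"
  shows "is_character Lmc (\<lambda>f. \<kappa> (Tmu \<rho> f))"
proof -
  interpret K: CB_character B \<kappa> by (rule \<kappa>)
  interpret R: Ltr_character Lmc \<rho> by (rule Ltr_character_Lmc[OF \<rho>])
  show ?thesis
    unfolding is_character_def
    using R.one_mem K.one
    by (auto simp: R.Tmu_add R.Tmu_mult R.Tmu_scale R.Tmu_one K.add K.mult K.scale T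
        intro!: bexI[of _ "\<lambda>x. 1"])
qed

lemma Tmu_mem_Lmc:
  assumes \<rho>: "is_character (Lmc :: ('a \<Rightarrow> complex) set) \<rho>" and f: "f \<in> Lmc"
  shows "Tmu \<rho> f \<in> Lmc"
proof (rule mem_LmcI)
  show "Tmu \<rho> f \<in> CB" by (rule Tmu_mem_CB[OF \<rho> f])
  fix \<kappa> :: "('a \<Rightarrow> complex) \<Rightarrow> complex" assume "\<kappa> \<in> betaS"
  then have \<kappa>: "CB_character CB \<kappa>" by (rule Ltr_character.axioms(1)[OF Ltr_character_betaS])
  have "Tmu \<kappa> (Tmu \<rho> f) = Tmu (\<lambda>g. \<kappa> (Tmu \<rho> g)) f"
    unfolding Tmu_def[of \<kappa>] by (simp add: Ltr_Tmu) (simp add: Tmu_def)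
  then show "Tmu \<kappa> (Tmu \<rho> f) \<in> CB"
    using Tmu_mem_CB[OF character_comp_Tmu[OF \<kappa> \<rho> Tmu_mem_CB[OF \<rho>]] f] by simp
qed

lemma lmc_mult_mem_SLmc:
  assumes "\<mu> \<in> SLmc" "\<nu> \<in> (SLmc :: (('a \<Rightarrow> complex) \<Rightarrow> complex) set)"
  shows "lmc_mult \<mu> \<nu> \<in> SLmc"
proof -
  interpret L: CB_algebra "Lmc :: ('a \<Rightarrow> complex) set" by (rule CB_algebra_Lmc)
  have "CB_character Lmc \<mu>" using assms(1) by (simp add: SLmc_iff CB_character_Lmc)
  moreover have \<nu>: "is_character Lmc \<nu>" using assms(2) by (simp add: SLmc_iff)
  ultimately have "is_character Lmc (\<lambda>f. \<mu> (Tmu \<nu> f))"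
    by (rule character_comp_Tmu[OF _ _ Tmu_mem_Lmc[OF \<nu>]])
  then show ?thesis unfolding SLmc_iff lmc_mult_def L.is_character_restrict by simp
qed

lemma evl_mem_SLmc: "(evl s :: ('a \<Rightarrow> complex) \<Rightarrow> complex) \<in> SLmc"
proof -
  interpret L: CB_algebra "Lmc :: ('a \<Rightarrow> complex) set" by (rule CB_algebra_Lmc)
  have "\<exists>f\<in>Lmc. f s \<noteq> (0::complex)"
    using L.one_mem by (intro bexI[of _ "\<lambda>x. 1"]) simp_all
  then have "is_character Lmc (\<lambda>f::'a \<Rightarrow> complex. f s)"
    by (simp add: is_character_def)
  then show ?thesis unfolding SLmc_iff evl_def L.is_character_restrict by simp
qed

lemma mem_lmc_closure_if_in_eval_closure:
  assumes \<phi>: "\<phi> \<in> SLmc" and P: "in_eval_closure Lmc (P :: 'a set) \<phi>"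
  shows "\<phi> \<in> lmc_closure P"
  unfolding lmc_closure_def in_closure_of topspace_SLmc_top
proof (intro conjI allI impI \<phi>)
  fix T assume "\<phi> \<in> T \<and> openin SLmc_top T"
  then obtain U where U: "openin (product_topology (\<lambda>_. euclidean) Lmc) U" "T = U \<inter> SLmc" "\<phi> \<in> U"
    unfolding SLmc_top_def openin_subtopology by blast
  then obtain V where V: "finite {g \<in> Lmc. V g \<noteq> UNIV}" "\<And>g. g \<in> Lmc \<Longrightarrow> open (V g)"
    "\<phi> \<in> Pi\<^sub>E Lmc V" "Pi\<^sub>E Lmc V \<subseteq> U"
    unfolding openin_product_topology_alt by auto
  define G where "G = {g \<in> Lmc. V g \<noteq> UNIV}"
  have "finite G" "G \<subseteq> Lmc" using V(1) by (auto simp: G_def)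
  moreover obtain e where e: "0 < e" "\<forall>g\<in>G. ball (\<phi> g) e \<subseteq> V g"
    using ex_common_ball[OF \<open>finite G\<close>, of V \<phi>] V(2,3) by (auto simp: G_def PiE_iff)
  ultimately obtain s where s: "s \<in> P" "\<forall>g\<in>G. cmod (g s - \<phi> g) < e"
    using in_eval_closureD[OF P] by blast
  have "evl s \<in> Pi\<^sub>E Lmc V"
  proof (rule PiE_I)
    fix g :: "'a \<Rightarrow> complex" assume g: "g \<in> Lmc"
    show "evl s g \<in> V g"
    proof (cases "g \<in> G")
      case True
      then have "g s \<in> ball (\<phi> g) e" using s(2) by (auto simp: dist_norm norm_minus_commute)
      then have "g s \<in> V g" using e(2) True by blast
      then show ?thesis using g by (simp add: evl_def)
    qed (use g in \<open>auto simp: G_def evl_def\<close>)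
  qed (simp add: evl_def)
  then have "evl s \<in> T" using V(4) U(2) evl_mem_SLmc by blast
  then show "\<exists>y. y \<in> evl ` P \<and> y \<in> T" using s(1) by blast
qed

lemma lmc_closure_iff:
  "\<phi> \<in> lmc_closure (P :: 'a set) \<longleftrightarrow> \<phi> \<in> SLmc \<and> in_eval_closure Lmc P \<phi>"
proof
  assume \<phi>: "\<phi> \<in> lmc_closure P"
  then have "\<phi> \<in> SLmc" by (simp add: lmc_closure_def in_closure_of topspace_SLmc_top)
  moreover have "in_eval_closure Lmc P \<phi>"
  proof (rule in_eval_closure_if_in_closure_of)
    show "continuous_map SLmc_top euclidean (\<lambda>\<psi>. \<psi> g)" if "g \<in> Lmc" for g
      unfolding SLmc_top_def
      by (rule continuous_map_from_subtopology[OF continuous_map_product_projection[OF that]])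
    show "\<phi> \<in> SLmc_top closure_of (\<lambda>s. restrict (\<lambda>g. g s) Lmc) ` P"
      using \<phi> by (simp add: lmc_closure_def evl_def[abs_def])
  qed
  ultimately show "\<phi> \<in> SLmc \<and> in_eval_closure Lmc P \<phi>" ..
qed (simp add: mem_lmc_closure_if_in_eval_closure)

section \<open>Sequences in S\<close>

lemma ex_cluster_point: "\<exists>\<phi>\<in>SLmc. \<forall>m. in_eval_closure Lmc ((x :: nat \<Rightarrow> 'a) ` {m..}) \<phi>"
proof -
  interpret L: CB_algebra "Lmc :: ('a \<Rightarrow> complex) set" by (rule CB_algebra_Lmc)
  have "\<exists>R\<in>range (\<lambda>m. x ` {m..}). R \<subseteq> P \<inter> Q"
    if PQ: "P \<in> range (\<lambda>m. x ` {m..})" "Q \<in> range (\<lambda>m. x ` {m..})" for P Q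
  proof -
    obtain m1 m2 where "P = x ` {m1..}" "Q = x ` {m2..}" using PQ by blast
    then have "x ` {max m1 m2..} \<subseteq> P \<inter> Q" by auto
    then show ?thesis by blast
  qed
  then obtain l where l: "l \<in> extensional Lmc" "\<And>m. in_eval_closure Lmc (x ` {m..}) l"
    using L.ex_in_eval_closure[of "range (\<lambda>m. x ` {m..})"] by auto
  then have "l \<in> SLmc" using L.character_if_in_eval_closure by (auto simp: SLmc_iff)
  with l(2) show ?thesis by blast
qed

lemma lmc_mult_near_if_clusters:
  assumes \<phi>: "\<And>m. in_eval_closure Lmc ((x :: nat \<Rightarrow> 'a) ` {m..}) \<phi>"
    and \<psi>: "\<And>m. in_eval_closure Lmc (y ` {m..}) \<psi>" "\<psi> \<in> SLmc"
    and f: "f \<in> Lmc" and near: "\<And>k n. k < n \<Longrightarrow> cmod (f (x k * y n) - c) \<le> \<delta>"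
  shows "cmod (lmc_mult \<phi> \<psi> f - c) \<le> \<delta>"
proof -
  have "cmod (Tmu \<psi> f (x k) - c) \<le> \<delta>" for k
    unfolding Tmu_def
    by (rule in_eval_closure_norm_le[OF \<psi>(1)[of "Suc k"] Ltr_mem_Lmc[OF f]]) (auto simp: Ltr_def near)
  then have "cmod (\<phi> (Tmu \<psi> f) - c) \<le> \<delta>"
    using \<psi>(2) by (intro in_eval_closure_norm_le[OF \<phi>[of 0] Tmu_mem_Lmc[OF _ f]]) (auto simp: SLmc_iff)
  then show ?thesis using f by (simp add: lmc_mult_def)
qed

lemma evl_lmc_mult_commute:
  assumes central: "\<And>t. s * t = t * s" and \<psi>: "\<psi> \<in> SLmc"
  shows "lmc_mult (evl (s :: 'a)) \<psi> = lmc_mult \<psi> (evl s)"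
  unfolding lmc_mult_def
proof (rule restrict_ext)
  fix f :: "'a \<Rightarrow> complex" assume f: "f \<in> Lmc"
  have "Tmu (evl s) f = Ltr s f"
    using Ltr_mem_Lmc[OF f] central by (simp add: Tmu_def evl_def Ltr_def fun_eq_iff)
  moreover have "evl s (Tmu \<psi> f) = \<psi> (Ltr s f)"
    using Tmu_mem_Lmc[OF _ f] \<psi> by (simp add: evl_def Tmu_def SLmc_iff)
  ultimately show "evl s (Tmu \<psi> f) = \<psi> (Tmu (evl s) f)" by simp
qed

lemma in_eval_closure_tail:
  assumes \<nu>: "\<nu> \<in> SLmc" "\<nu> \<notin> range evl" and \<nu>_y: "in_eval_closure Lmc (range (y :: nat \<Rightarrow> 'a)) \<nu>"
  shows "in_eval_closure Lmc (y ` {k<..}) \<nu>"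
proof -
  have "\<exists>h\<in>Lmc. \<nu> h \<noteq> h s" for s
  proof (rule ccontr)
    assume "\<not> (\<exists>h\<in>Lmc. \<nu> h \<noteq> h s)"
    then have "\<nu> = evl s"
      using \<nu>(1) by (intro extensionalityI[where A=Lmc]) (auto simp: SLmc_iff evl_def)
    with \<nu>(2) show False by blast
  qed
  then have "in_eval_closure Lmc (range y - y ` {..k}) \<nu>"
    by (intro in_eval_closure_Diff_finite[OF \<nu>_y]) auto
  moreover have "range y - y ` {..k} \<subseteq> y ` {k<..}"
  proof
    fix t assume "t \<in> range y - y ` {..k}"
    then obtain j where "t = y j" "\<not> j \<le> k" by auto
    then show "t \<in> y ` {k<..}" by auto
  qed
  ultimately show ?thesis by (rule in_eval_closure_mono)
qed

text \<open>Approximate \<mu> at some x k on the functions Tmu \<nu> g, then \<nu> at some later y n on their translates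
  Ltr (x k) g; this uses that \<nu>, not being an evaluation, adheres to every tail of y.\<close>
lemma lmc_mult_mem_lmc_closure:
  assumes \<mu>: "\<mu> \<in> lmc_closure (range (x :: nat \<Rightarrow> 'a))" and \<nu>: "\<nu> \<in> lmc_closure (range y)"
    and not_evl: "\<nu> \<notin> range evl"
  shows "lmc_mult \<mu> \<nu> \<in> lmc_closure {x k * y n | k n. k < n}"
proof -
  from \<mu> \<nu> have "\<mu> \<in> SLmc" "\<nu> \<in> SLmc"
    and \<mu>_x: "in_eval_closure Lmc (range x) \<mu>" and \<nu>_y: "in_eval_closure Lmc (range y) \<nu>"
    by (simp_all add: lmc_closure_iff)
  note \<nu>_tail = in_eval_closure_tail[OF \<open>\<nu> \<in> SLmc\<close> not_evl \<nu>_y]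
  have "in_eval_closure Lmc {x k * y n | k n. k < n} (lmc_mult \<mu> \<nu>)"
  proof (rule in_eval_closureI)
    fix G :: "('a \<Rightarrow> complex) set" and e :: real
    assume G: "finite G" "G \<subseteq> Lmc" and e: "0 < e"
    have \<nu>_char: "is_character Lmc \<nu>" using \<open>\<nu> \<in> SLmc\<close> by (simp add: SLmc_iff)
    obtain k where k: "\<forall>g\<in>Tmu \<nu> ` G. cmod (g (x k) - \<mu> g) < e/2"
      using in_eval_closureD[OF \<mu>_x, of "Tmu \<nu> ` G" "e/2"] G e Tmu_mem_Lmc[OF \<nu>_char] by auto
    obtain n where n: "k < n" "\<forall>g\<in>(\<lambda>g. Ltr (x k) g) ` G. cmod (g (y n) - \<nu> g) < e/2"
      using in_eval_closureD[OF \<nu>_tail[of k], of "(\<lambda>g. Ltr (x k) g) ` G" "e/2"] G e Ltr_mem_Lmc by auto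
    have "cmod (g (x k * y n) - lmc_mult \<mu> \<nu> g) < e" if "g \<in> G" for g
    proof -
      have "cmod (g (x k * y n) - \<nu> (Ltr (x k) g)) < e/2" using n(2) that by (auto simp: Ltr_def)
      moreover have "cmod (Tmu \<nu> g (x k) - \<mu> (Tmu \<nu> g)) < e/2" using k that by auto
      ultimately have "cmod (g (x k * y n) - \<mu> (Tmu \<nu> g)) < e/2 + e/2"
        by (intro norm_diff_triangle_less) (auto simp: Tmu_def)
      then show ?thesis using that G(2) by (auto simp: lmc_mult_def)
    qed
    then show "\<exists>s\<in>{x k * y n | k n. k < n}. \<forall>g\<in>G. cmod (g s - lmc_mult \<mu> \<nu> g) < e"
      using n(1) by blast
  qed
  then show ?thesis
    using lmc_mult_mem_SLmc[OF \<open>\<mu> \<in> SLmc\<close> \<open>\<nu> \<in> SLmc\<close>] by (simp add: lmc_closure_iff)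
qed

lemma ex_point_near_translates:
  assumes \<mu>: "\<mu> \<in> SLmc" and f: "f \<in> Lmc" and h: "h \<in> Lmc" and Y: "finite Y"
    and near: "\<And>y. y \<in> Y \<Longrightarrow> cmod (Tmu \<mu> f y - c) < \<delta>" and e: "0 < e"
  shows "\<exists>x :: 'a. cmod (h x - \<mu> h) < e \<and> (\<forall>y\<in>Y. cmod (f (y * x) - c) < e + \<delta>)"
proof -
  interpret M: CB_character Lmc \<mu> using \<mu> by (simp add: SLmc_iff CB_character_Lmc)
  have "finite (insert h ((\<lambda>y. Ltr y f) ` Y))" "insert h ((\<lambda>y. Ltr y f) ` Y) \<subseteq> Lmc"
    using Y h Ltr_mem_Lmc[OF f] by auto
  then obtain x where x: "\<forall>g\<in>insert h ((\<lambda>y. Ltr y f) ` Y). cmod (g x - \<mu> g) < e"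
    using in_eval_closureD[OF M.in_eval_closure_UNIV _ _ e] by blast
  have "cmod (f (y * x) - c) < e + \<delta>" if "y \<in> Y" for y
  proof (rule norm_diff_triangle_less)
    show "cmod (f (y * x) - Tmu \<mu> f y) < e" using x that by (auto simp: Tmu_def Ltr_def)
  qed (rule near[OF that])
  then show ?thesis using x by blast
qed

text \<open>The pairs (x n, y n) are chosen one at a time: x n approximates \<mu> on the translates of f by all
  earlier y k, and y n approximates \<nu> on those by all earlier x k.\<close>
lemma ex_sequences_near_products:
  assumes \<mu>: "\<mu> \<in> SLmc" and \<nu>: "\<nu> \<in> SLmc" and f: "f \<in> Lmc" and "0 < \<delta>"
  shows "\<exists>x y :: nat \<Rightarrow> 'a. \<forall>k n. k < n \<longrightarrow>
    cmod (f (x k * y n) - lmc_mult \<mu> \<nu> f) < \<delta> \<and> cmod (f (y k * x n) - lmc_mult \<nu> \<mu> f) < \<delta>"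
proof -
  define a where "a = \<mu> (Tmu \<nu> f)"
  define b where "b = \<nu> (Tmu \<mu> f)"
  have T: "Tmu \<mu> f \<in> Lmc" "Tmu \<nu> f \<in> Lmc"
    using \<mu> \<nu> Tmu_mem_Lmc[OF _ f] by (simp_all add: SLmc_iff)
  define Q where "Q = (\<lambda>(x', y'). cmod (Tmu \<nu> f x' - a) < \<delta>/2 \<and> cmod (Tmu \<mu> f y' - b) < \<delta>/2)"
  define R where "R = (\<lambda>(xk, yk) (xn, yn). cmod (f (xk * yn) - a) < \<delta> \<and> cmod (f (yk * xn) - b) < \<delta>)"
  have "\<exists>z. Q z \<and> (\<forall>p\<in>F. R p z)" if F: "finite F" "\<forall>p\<in>F. Q p" for F
  proof -
    obtain x' where x': "cmod (Tmu \<nu> f x' - a) < \<delta>/2" "\<forall>y\<in>snd ` F. cmod (f (y * x') - b) < \<delta>/2 + \<delta>/2"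
      using ex_point_near_translates[OF \<mu> f T(2), of "snd ` F" b "\<delta>/2" "\<delta>/2"] F \<open>0 < \<delta>\<close>
      by (force simp: Q_def a_def b_def)
    obtain y' where y': "cmod (Tmu \<mu> f y' - b) < \<delta>/2" "\<forall>x\<in>fst ` F. cmod (f (x * y') - a) < \<delta>/2 + \<delta>/2"
      using ex_point_near_translates[OF \<nu> f T(1), of "fst ` F" a "\<delta>/2" "\<delta>/2"] F \<open>0 < \<delta>\<close>
      by (force simp: Q_def a_def b_def)
    have "Q (x', y') \<and> (\<forall>p\<in>F. R p (x', y'))" using x' y' by (auto simp: Q_def R_def)
    then show ?thesis by blast
  qed
  then obtain z where "\<forall>k n::nat. k < n \<longrightarrow> R (z k) (z n)"
    using pairwise_dependent_choice by metis
  then have "\<forall>k n. k < n \<longrightarrow>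
      cmod (f (fst (z k) * snd (z n)) - a) < \<delta> \<and> cmod (f (snd (z k) * fst (z n)) - b) < \<delta>"
    by (simp add: R_def split_beta)
  moreover have "lmc_mult \<mu> \<nu> f = a" "lmc_mult \<nu> \<mu> f = b"
    using f by (simp_all add: lmc_mult_def a_def b_def)
  ultimately show ?thesis by (intro exI[of _ "fst \<circ> z"] exI[of _ "snd \<circ> z"]) simp
qed

lemma lmc_closure_norm_le:
  assumes "\<theta> \<in> lmc_closure (P :: 'a set)" "f \<in> Lmc" "\<And>s. s \<in> P \<Longrightarrow> cmod (f s - c) \<le> \<delta>"
  shows "cmod (\<theta> f - c) \<le> \<delta>"
proof (rule in_eval_closure_norm_le[OF _ assms(2,3)])
  show "in_eval_closure Lmc P \<theta>" using assms(1) by (simp add: lmc_closure_iff)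
qed

lemma ex_separating_sequences:
  assumes \<mu>: "\<mu> \<in> (SLmc :: (('a \<Rightarrow> complex) \<Rightarrow> complex) set)" and \<nu>: "\<nu> \<in> SLmc"
    and noncomm: "lmc_mult \<mu> \<nu> \<noteq> lmc_mult \<nu> \<mu>"
  shows "\<exists>(x :: nat \<Rightarrow> 'a) y \<phi> \<psi>. \<phi> \<in> lmc_closure (range x) \<and> \<psi> \<in> lmc_closure (range y) \<and>
    lmc_mult \<phi> \<psi> \<noteq> lmc_mult \<psi> \<phi> \<and>
    lmc_closure {x k * y n | k n. k < n} \<inter> lmc_closure {y k * x n | k n. k < n} = {}"
proof -
  obtain f where f: "f \<in> Lmc" and "lmc_mult \<mu> \<nu> f \<noteq> lmc_mult \<nu> \<mu> f"
    using noncomm lmc_mult_eq_iff by blast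
  then obtain a b where ab: "a = lmc_mult \<mu> \<nu> f" "b = lmc_mult \<nu> \<mu> f" "a \<noteq> b" by blast
  define \<delta> where "\<delta> = cmod (a - b) / 3"
  have "0 < \<delta>" using ab by (simp add: \<delta>_def)
  have far: "\<not> (cmod (p - a) \<le> \<delta> \<and> cmod (p - b) \<le> \<delta>)" for p
    using norm_diff_triangle_le[of a p \<delta> b \<delta>] \<open>0 < \<delta>\<close> by (auto simp: \<delta>_def norm_minus_commute)
  obtain x y :: "nat \<Rightarrow> 'a"
    where xy: "\<forall>k n. k < n \<longrightarrow> cmod (f (x k * y n) - a) < \<delta> \<and> cmod (f (y k * x n) - b) < \<delta>"
    using ex_sequences_near_products[OF \<mu> \<nu> f \<open>0 < \<delta>\<close>] unfolding ab by blast
  then have near: "\<And>k n. k < n \<Longrightarrow> cmod (f (x k * y n) - a) \<le> \<delta>"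
      "\<And>k n. k < n \<Longrightarrow> cmod (f (y k * x n) - b) \<le> \<delta>"
    by (simp_all add: less_imp_le)
  obtain \<phi> \<psi> where \<phi>: "\<phi> \<in> SLmc" "\<And>m. in_eval_closure Lmc (x ` {m..}) \<phi>"
    and \<psi>: "\<psi> \<in> SLmc" "\<And>m. in_eval_closure Lmc (y ` {m..}) \<psi>"
    using ex_cluster_point by meson
  have "\<phi> \<in> lmc_closure (range x)" "\<psi> \<in> lmc_closure (range y)"
    using \<phi> \<psi> by (simp_all add: lmc_closure_iff flip: atLeast_0)
  moreover have "lmc_mult \<phi> \<psi> \<noteq> lmc_mult \<psi> \<phi>"
  proof
    assume "lmc_mult \<phi> \<psi> = lmc_mult \<psi> \<phi>"
    moreover have "cmod (lmc_mult \<phi> \<psi> f - a) \<le> \<delta>"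
      by (rule lmc_mult_near_if_clusters[OF \<phi>(2) \<psi>(2,1) f near(1)])
    moreover have "cmod (lmc_mult \<psi> \<phi> f - b) \<le> \<delta>"
      by (rule lmc_mult_near_if_clusters[OF \<psi>(2) \<phi>(2,1) f near(2)])
    ultimately show False using far[of "lmc_mult \<phi> \<psi> f"] by simp
  qed
  moreover have "lmc_closure {x k * y n | k n. k < n} \<inter> lmc_closure {y k * x n | k n. k < n} = {}"
  proof (intro equals0I)
    fix \<theta> assume "\<theta> \<in> lmc_closure {x k * y n | k n. k < n} \<inter> lmc_closure {y k * x n | k n. k < n}"
    then have \<theta>_xy: "\<theta> \<in> lmc_closure {x k * y n | k n. k < n}"
      and \<theta>_yx: "\<theta> \<in> lmc_closure {y k * x n | k n. k < n}"
      by blast+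
    have "cmod (\<theta> f - a) \<le> \<delta>" by (rule lmc_closure_norm_le[OF \<theta>_xy f]) (auto simp: near)
    moreover have "cmod (\<theta> f - b) \<le> \<delta>" by (rule lmc_closure_norm_le[OF \<theta>_yx f]) (auto simp: near)
    ultimately show False using far by blast
  qed
  ultimately show ?thesis by blast
qed

lemma unbounded_seq_iff: "unbounded_seq (x :: nat \<Rightarrow> 'a) \<longleftrightarrow> (\<exists>\<phi>\<in>lmc_closure (range x). \<phi> \<notin> range evl)"
  by (auto simp: unbounded_seq_def unbounded_set_def Sstar_def lmc_closure_iff)

lemma noncommutative_if_separated:
  assumes "unbounded_seq x" "unbounded_seq (y :: nat \<Rightarrow> 'a)"
    and disjoint: "lmc_closure {x k * y n | k n. k < n} \<inter> lmc_closure {y k * x n | k n. k < n} = {}"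
  shows "\<not> SLmc_commutative TYPE('a)"
proof
  obtain \<mu> \<nu> where \<mu>: "\<mu> \<in> lmc_closure (range x)" "\<mu> \<notin> range evl"
    and \<nu>: "\<nu> \<in> lmc_closure (range y)" "\<nu> \<notin> range evl"
    using assms(1,2) unfolding unbounded_seq_iff by blast
  have "lmc_mult \<mu> \<nu> \<in> lmc_closure {x k * y n | k n. k < n}"
    and "lmc_mult \<nu> \<mu> \<in> lmc_closure {y k * x n | k n. k < n}"
    using lmc_mult_mem_lmc_closure \<mu> \<nu> by blast+
  then have "lmc_mult \<mu> \<nu> \<noteq> lmc_mult \<nu> \<mu>" using disjoint by auto
  moreover have "\<mu> \<in> SLmc" "\<nu> \<in> SLmc" using \<mu>(1) \<nu>(1) by (simp_all add: lmc_closure_iff)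
  moreover assume "SLmc_commutative TYPE('a)"
  ultimately show False unfolding SLmc_commutative_def by blast
qed

end

lemma separated_if_noncommutative:
  assumes left_continuous:
      "\<And>s::'a::{topological_space, ab_semigroup_mult}. continuous_on UNIV (\<lambda>x. s * x)"
    and "\<not> SLmc_commutative TYPE('a)"
  shows "\<exists>x y :: nat \<Rightarrow> 'a. unbounded_seq x \<and> unbounded_seq y \<and>
    lmc_closure {x k * y n | k n. k < n} \<inter> lmc_closure {y k * x n | k n. k < n} = {}"
proof -
  obtain \<mu> \<nu> :: "('a \<Rightarrow> complex) \<Rightarrow> complex"
    where "\<mu> \<in> SLmc" "\<nu> \<in> SLmc" "lmc_mult \<mu> \<nu> \<noteq> lmc_mult \<nu> \<mu>"
    using assms(2) unfolding SLmc_commutative_def by blast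
  then obtain x y :: "nat \<Rightarrow> 'a" and \<phi> \<psi>
    where \<phi>: "\<phi> \<in> lmc_closure (range x)" and \<psi>: "\<psi> \<in> lmc_closure (range y)"
      and noncomm: "lmc_mult \<phi> \<psi> \<noteq> lmc_mult \<psi> \<phi>"
      and disjoint: "lmc_closure {x k * y n | k n. k < n} \<inter> lmc_closure {y k * x n | k n. k < n} = {}"
    using ex_separating_sequences[OF left_continuous] by blast
  have "\<phi> \<in> SLmc" "\<psi> \<in> SLmc" using \<phi> \<psi> by (simp_all add: lmc_closure_iff[OF left_continuous])
  then have "\<phi> \<notin> range evl" "\<psi> \<notin> range evl"
    using noncomm evl_lmc_mult_commute[OF left_continuous mult.commute] by auto
  with \<phi> \<psi> disjoint show ?thesis by (auto simp: unbounded_seq_iff[OF left_continuous])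
qed

theorem theorem4p5:
  assumes "\<forall>s::'a::{t2_space, ab_semigroup_mult}. continuous_on UNIV (\<lambda>x. s * x)"
    and "\<forall>s::'a. continuous_on UNIV (\<lambda>x. x * s)"
  shows "\<not> SLmc_commutative TYPE('a) \<longleftrightarrow>
    (\<exists>x y :: nat \<Rightarrow> 'a. unbounded_seq x \<and> unbounded_seq y \<and>
       lmc_closure {x k * y n | k n. k < n} \<inter> lmc_closure {y k * x n | k n. k < n} = {})"
proof -
  have "\<And>s::'a. continuous_on UNIV (\<lambda>x. s * x)" using assms(1) by blast
  then show ?thesis using separated_if_noncommutative noncommutative_if_separated by blast
qed

end
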